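(* Let $\mathcal{H}$ be a complex Hilbert space, let $N(\cdot)$ be a weakly unitarily invariant algebra norm on $\mathbb{B}(\mathcal{H})$, and let $T$ and $S$ be self-adjoint operators in $\mathbb{B}(\mathcal{H})$ with $\|T\|\le 1$ and $\|S\|\le 1$. Then, for each choice of sign, $$w_{N}(TS \pm ST) \leq \min\{w_{N}(T), w_{N}(S)\}\sup_{U\in\mathcal{U}}\big\{N(U) + N(U^* )\big\}.$$ In particular, if $N(\cdot)$ is a weakly unitarily invariant self-adjoint algebra norm, then $$w_{N}(TS \pm ST) \leq 2\min\{N(T), N(S)\}\sup_{U\in\mathcal{U}}N(U).$$
   Context: $\mathbb{B}(\mathcal{H})$ is the algebra of bounded linear operators on $\mathcal{H}$, $\|\cdot\|$ the usual operator norm, and $\mathcal{U}$ the group of unitary operators in $\mathbb{B}(\mathcal{H})$. A norm $N(\cdot)$ on $\mathbb{B}(\mathcal{H})$ is an algebra norm if $N(TS)\le N(T)N(S)$ for all $T,S$; self-adjoint if $N(T^* )=N(T)$ for all $T$; weakly unitarily invariant if $N(U^*TU)=N(T)$ for all $T\in\mathbb{B}(\mathcal{H})$, $U\in\mathcal{U}$. For $A\in\mathbb{B}(\mathcal{H})$, ${\rm Re}(A)=\frac{A+A^*}{2}$. The generalized numerical radius is $w_N(T)=\sup_{\theta\in\mathbb{R}} N\big({\rm Re}(e^{i\theta}T)\big)$. *)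

theory Defs
  imports "HOL-Analysis.Analysis"
begin

class scaleC =
  fixes scaleC :: "complex \<Rightarrow> 'a \<Rightarrow> 'a" (infixr \<open>*\<^sub>C\<close> 75)

class complex_vector = real_vector + scaleC +
  assumes scaleC_add_right: "a *\<^sub>C (x + y) = a *\<^sub>C x + a *\<^sub>C y"
    and scaleC_add_left: "(a + b) *\<^sub>C x = a *\<^sub>C x + b *\<^sub>C x"
    and scaleC_scaleC: "a *\<^sub>C (b *\<^sub>C x) = (a * b) *\<^sub>C x"
    and scaleC_one: "1 *\<^sub>C x = x"
    and scaleR_scaleC: "r *\<^sub>R x = complex_of_real r *\<^sub>C x"

text \<open>Complex inner product space; the inner product is conjugate-linear in the
first and linear in the second argument, and induces the norm.\<close>
class complex_inner = complex_vector + real_normed_vector +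
  fixes cinner :: "'a \<Rightarrow> 'a \<Rightarrow> complex"
  assumes cinner_commute: "cinner x y = cnj (cinner y x)"
    and cinner_add_right: "cinner x (y + z) = cinner x y + cinner x z"
    and cinner_scaleC_right: "cinner x (a *\<^sub>C y) = a * cinner x y"
    and cinner_ge_zero: "0 \<le> Re (cinner x x) \<and> Im (cinner x x) = 0"
    and cinner_eq_zero_iff: "cinner x x = 0 \<longleftrightarrow> x = 0"
    and norm_eq_sqrt_cinner: "norm x = sqrt (Re (cinner x x))"

class chilbert = complex_inner + complete_space

definition clinear_op :: "('a::complex_vector \<Rightarrow> 'a) \<Rightarrow> bool" where
  "clinear_op T \<longleftrightarrow> (\<forall>x y. T (x + y) = T x + T y) \<and> (\<forall>c x. T (c *\<^sub>C x) = c *\<^sub>C T x)"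

definition bounded_op :: "('a::complex_inner \<Rightarrow> 'a) \<Rightarrow> bool" where
  "bounded_op T \<longleftrightarrow> clinear_op T \<and> (\<exists>K. \<forall>x. norm (T x) \<le> K * norm x)"

definition opnorm :: "('a::complex_inner \<Rightarrow> 'a) \<Rightarrow> real" where
  "opnorm T = onorm T"

text \<open>Hilbert space adjoint (exists and is unique for bounded operators).\<close>
definition adj :: "('a::complex_inner \<Rightarrow> 'a) \<Rightarrow> ('a \<Rightarrow> 'a)" where
  "adj T = (SOME A. bounded_op A \<and> (\<forall>x y. cinner (T x) y = cinner x (A y)))"

definition self_adjoint_op :: "('a::complex_inner \<Rightarrow> 'a) \<Rightarrow> bool" where
  "self_adjoint_op T \<longleftrightarrow> bounded_op T \<and> adj T = T"

definition unitary_op :: "('a::complex_inner \<Rightarrow> 'a) \<Rightarrow> bool" where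
  "unitary_op U \<longleftrightarrow> bounded_op U \<and> adj U \<circ> U = id \<and> U \<circ> adj U = id"

definition ReOp :: "('a::complex_inner \<Rightarrow> 'a) \<Rightarrow> ('a \<Rightarrow> 'a)" where
  "ReOp A = (\<lambda>x. (1/2) *\<^sub>C (A x + adj A x))"

definition is_norm_on_ops :: "(('a::complex_inner \<Rightarrow> 'a) \<Rightarrow> real) \<Rightarrow> bool" where
  "is_norm_on_ops N \<longleftrightarrow>
     (\<forall>A. bounded_op A \<longrightarrow> 0 \<le> N A \<and> (N A = 0 \<longleftrightarrow> A = (\<lambda>x. 0))) \<and>
     (\<forall>A B. bounded_op A \<longrightarrow> bounded_op B \<longrightarrow> N (\<lambda>x. A x + B x) \<le> N A + N B) \<and>
     (\<forall>c A. bounded_op A \<longrightarrow> N (\<lambda>x. c *\<^sub>C A x) = cmod c * N A)"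

definition algebra_norm :: "(('a::complex_inner \<Rightarrow> 'a) \<Rightarrow> real) \<Rightarrow> bool" where
  "algebra_norm N \<longleftrightarrow> is_norm_on_ops N \<and>
     (\<forall>T S. bounded_op T \<longrightarrow> bounded_op S \<longrightarrow> N (T \<circ> S) \<le> N T * N S)"

definition selfadjoint_norm :: "(('a::complex_inner \<Rightarrow> 'a) \<Rightarrow> real) \<Rightarrow> bool" where
  "selfadjoint_norm N \<longleftrightarrow> (\<forall>T. bounded_op T \<longrightarrow> N (adj T) = N T)"

definition weakly_unitarily_invariant :: "(('a::complex_inner \<Rightarrow> 'a) \<Rightarrow> real) \<Rightarrow> bool" where
  "weakly_unitarily_invariant N \<longleftrightarrow>
     (\<forall>T U. bounded_op T \<longrightarrow> unitary_op U \<longrightarrow> N (adj U \<circ> T \<circ> U) = N T)"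

definition wN :: "(('a::complex_inner \<Rightarrow> 'a) \<Rightarrow> real) \<Rightarrow> ('a \<Rightarrow> 'a) \<Rightarrow> real" where
  "wN N T = (SUP \<theta>::real. N (ReOp (\<lambda>x. cis \<theta> *\<^sub>C T x)))"

end

theory Submission
  imports Defs
begin

(* For self-adjoint T the operators Re(e^{i t} T) are cos t * T, so w_N(T) = N(T); likewise
   TS + ST is self-adjoint and TS - ST is skew-adjoint, so w_N(TS +- ST) = N(TS +- ST), which the
   algebra-norm inequality bounds by 2 N(T) N(S) = min{N T, N S} * 2 max{N T, N S}.
   A self-adjoint contraction T is the real part of the unitary U = T + i sqrt(1 - T^2), hence
   2 N(T) <= N(U) + N(adj U); the square root is the binomial series of sqrt(1 - x) evaluated at
   T^2, which converges absolutely in operator norm because sum_n |binom(1/2, n)| = 2. Since adj is defined by choice, reading off the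
   symmetry of T from adj T = T requires that adjoints exist, i.e. the Riesz representation theorem. *)

lemma scaleC_zero_left [simp]: "(0::complex) *\<^sub>C (x::'a::complex_vector) = 0"
  using scaleR_scaleC[of 0 x] by simp

lemma scaleC_zero_right [simp]: "a *\<^sub>C (0::'a::complex_vector) = 0"
  using scaleC_add_right[of a "0::'a" 0] by simp

lemma scaleC_minus_left: "(- a) *\<^sub>C (x::'a::complex_vector) = - (a *\<^sub>C x)"
  using scaleC_add_left[of a "-a" x] by (simp add: eq_neg_iff_add_eq_0 add.commute)

lemma scaleC_minus_right: "a *\<^sub>C (- x::'a::complex_vector) = - (a *\<^sub>C x)"
  using scaleC_add_right[of a x "-x"] by (simp add: eq_neg_iff_add_eq_0 add.commute)

lemma scaleC_diff_left: "(a - b) *\<^sub>C (x::'a::complex_vector) = a *\<^sub>C x - b *\<^sub>C x"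
  using scaleC_add_left[of a "-b" x] by (simp add: scaleC_minus_left)

lemma scaleC_diff_right: "a *\<^sub>C (x - y::'a::complex_vector) = a *\<^sub>C x - a *\<^sub>C y"
  using scaleC_add_right[of a x "-y"] by (simp add: scaleC_minus_right)

lemma cinner_add_left: "cinner (x + y) (z::'a::complex_inner) = cinner x z + cinner y z"
  by (metis cinner_add_right cinner_commute complex_cnj_add)

lemma cinner_scaleC_left: "cinner (a *\<^sub>C x) (y::'a::complex_inner) = cnj a * cinner x y"
  by (metis cinner_commute cinner_scaleC_right complex_cnj_cnj complex_cnj_mult)

lemma cinner_zero_right [simp]: "cinner x (0::'a::complex_inner) = 0"
  using cinner_add_right[of x 0 0] by simp

lemma cinner_zero_left [simp]: "cinner (0::'a::complex_inner) x = 0"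
  using cinner_add_left[of 0 0 x] by simp

lemma cinner_minus_right: "cinner x (- y::'a::complex_inner) = - cinner x y"
  using cinner_add_right[of x y "-y"] by (simp add: eq_neg_iff_add_eq_0 add.commute)

lemma cinner_minus_left: "cinner (- x) (y::'a::complex_inner) = - cinner x y"
  using cinner_add_left[of x "-x" y] by (simp add: eq_neg_iff_add_eq_0 add.commute)

lemma cinner_diff_right: "cinner x (y - z::'a::complex_inner) = cinner x y - cinner x z"
  using cinner_add_right[of x y "-z"] by (simp add: cinner_minus_right)

lemma cinner_diff_left: "cinner (x - y) (z::'a::complex_inner) = cinner x z - cinner y z"
  using cinner_add_left[of x "-y" z] by (simp add: cinner_minus_left)

lemma cinner_scaleR_left: "cinner (r *\<^sub>R x) (y::'a::complex_inner) = of_real r * cinner x y"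
  by (simp add: scaleR_scaleC cinner_scaleC_left)

lemma cinner_scaleR_right: "cinner x (r *\<^sub>R y::'a::complex_inner) = of_real r * cinner x y"
  by (simp add: scaleR_scaleC cinner_scaleC_right)

lemma power2_norm_eq_cinner: "(norm x)\<^sup>2 = Re (cinner x (x::'a::complex_inner))"
  using norm_eq_sqrt_cinner[of x] cinner_ge_zero[of x] by simp

lemma norm_scaleC: "norm (a *\<^sub>C (x::'a::complex_inner)) = cmod a * norm x"
proof -
  have "cinner (a *\<^sub>C x) (a *\<^sub>C x) = (a * cnj a) * cinner x x"
    by (simp add: cinner_scaleC_left cinner_scaleC_right mult_ac)
  also have "a * cnj a = complex_of_real ((cmod a)\<^sup>2)"
    by (simp only: complex_norm_square)
  finally have "(norm (a *\<^sub>C x))\<^sup>2 = (cmod a * norm x)\<^sup>2"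
    by (simp add: power2_norm_eq_cinner power_mult_distrib)
  then show ?thesis
    by (simp add: power2_eq_iff_nonneg)
qed

lemma power2_norm_add:
  "(norm (x + y))\<^sup>2 = (norm x)\<^sup>2 + (norm y)\<^sup>2 + 2 * Re (cinner x (y::'a::complex_inner))"
  using cinner_commute[of y x]
  by (simp add: power2_norm_eq_cinner cinner_add_left cinner_add_right)

lemma power2_norm_diff:
  "(norm (x - y))\<^sup>2 = (norm x)\<^sup>2 + (norm y)\<^sup>2 - 2 * Re (cinner x (y::'a::complex_inner))"
  using power2_norm_add[of x "-y"] by (simp add: cinner_minus_right)

lemma parallelogram_law:
  "(norm (x + y))\<^sup>2 + (norm (x - y))\<^sup>2 = 2 * (norm x)\<^sup>2 + 2 * (norm (y::'a::complex_inner))\<^sup>2"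
  using power2_norm_add[of x y] power2_norm_diff[of x y] by simp

lemma power2_norm_diff_projection:
  fixes x y :: "'a::complex_inner"
  assumes "y \<noteq> 0"
  shows "(norm (x - (cinner y x / complex_of_real ((norm y)\<^sup>2)) *\<^sub>C y))\<^sup>2
           = (norm x)\<^sup>2 - (cmod (cinner y x))\<^sup>2 / (norm y)\<^sup>2"
proof -
  define a where "a = cinner y x"
  define t where "t = a / complex_of_real ((norm y)\<^sup>2)"
  have "(norm (x - t *\<^sub>C y))\<^sup>2 = (norm x)\<^sup>2 + (cmod t * norm y)\<^sup>2 - 2 * Re (t * cnj a)"
    by (simp add: power2_norm_diff norm_scaleC cinner_scaleC_right a_def cinner_commute[of x y])
  also have "t * cnj a = complex_of_real ((cmod a)\<^sup>2 / (norm y)\<^sup>2)"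
    unfolding t_def times_divide_eq_left by (simp only: of_real_divide complex_norm_square)
  also have "(cmod t * norm y)\<^sup>2 = (cmod a)\<^sup>2 / (norm y)\<^sup>2"
  proof -
    have "cmod t = cmod a / (norm y)\<^sup>2"
      by (simp add: t_def norm_divide norm_power)
    then show ?thesis
      using assms by (simp add: power_divide power_mult_distrib power2_eq_square)
  qed
  finally show ?thesis
    unfolding t_def a_def by simp
qed

lemma cauchy_schwarz: "cmod (cinner x y) \<le> norm x * norm (y::'a::complex_inner)"
proof (cases "y = 0")
  case False
  have "0 \<le> (norm (x - (cinner y x / complex_of_real ((norm y)\<^sup>2)) *\<^sub>C y))\<^sup>2"
    by simp
  then have "(cmod (cinner y x))\<^sup>2 / (norm y)\<^sup>2 \<le> (norm x)\<^sup>2"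
    unfolding power2_norm_diff_projection[OF False] by simp
  then have "(cmod (cinner y x))\<^sup>2 \<le> (norm x * norm y)\<^sup>2"
    using False by (simp add: pos_divide_le_eq power_mult_distrib)
  then have "cmod (cinner y x) \<le> norm x * norm y"
    by (rule power2_le_imp_le) simp
  then show ?thesis
    by (simp add: cinner_commute[of x y])
qed simp

lemma cinner_ext:
  fixes u v :: "'a::complex_inner"
  assumes "\<And>x. cinner x u = cinner x v"
  shows "u = v"
  using assms[of "u - v"] cinner_eq_zero_iff[of "u - v"] by (simp add: cinner_diff_right)

lemma bounded_linear_cinner_left: "bounded_linear (\<lambda>x::'a::complex_inner. cinner x y)"
  by (rule bounded_linear_intro[where K="norm y"])
    (auto simp: cinner_add_left cinner_scaleR_left scaleR_conv_of_real cauchy_schwarz)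

lemma bounded_linear_cinner_right: "bounded_linear (\<lambda>y::'a::complex_inner. cinner x y)"
  by (rule bounded_linear_intro[where K="norm x"])
    (auto simp: cinner_add_right cinner_scaleR_right scaleR_conv_of_real,
      metis cauchy_schwarz mult.commute)

section \<open>The Riesz representation theorem\<close>

lemma norm_diff_le_via_midpoint:
  fixes y a b :: "'a::complex_inner"
  assumes "0 \<le> d" "d \<le> norm (y - (1/2) *\<^sub>R (a + b))"
  shows "(norm (a - b))\<^sup>2 \<le> 2 * (norm (y - a))\<^sup>2 + 2 * (norm (y - b))\<^sup>2 - 4 * d\<^sup>2"
proof -
  have "y - a + (y - b) = 2 *\<^sub>R (y - (1/2) *\<^sub>R (a + b))"
    by (simp add: algebra_simps scaleR_2)
  then have "(2 * d)\<^sup>2 \<le> (norm (y - a + (y - b)))\<^sup>2"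
    using assms by (simp add: power_mono)
  moreover have "y - a - (y - b) = - (a - b)"
    by simp
  ultimately show ?thesis
    using parallelogram_law[of "y - a" "y - b"] norm_minus_commute[of a b]
    by (simp add: power_mult_distrib)
qed

lemma infdist_minimizing_sequence:
  assumes "K \<noteq> {}"
  obtains k where "\<And>n. k n \<in> K" "\<And>n. (dist y (k n))\<^sup>2 < (infdist y K)\<^sup>2 + inverse (real (Suc n))"
proof -
  have "\<exists>k\<in>K. (dist y k)\<^sup>2 < (infdist y K)\<^sup>2 + inverse (real (Suc n))" for n
  proof -
    have "infdist y K < sqrt ((infdist y K)\<^sup>2 + inverse (real (Suc n)))"
      by (simp add: real_less_rsqrt infdist_nonneg)
    then obtain k where "k \<in> K" "dist y k < sqrt ((infdist y K)\<^sup>2 + inverse (real (Suc n)))"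
      using cINF_less_iff[OF assms bdd_below_image_dist, of y] by (auto simp: infdist_notempty[OF assms])
    then have "(dist y k)\<^sup>2 < (sqrt ((infdist y K)\<^sup>2 + inverse (real (Suc n))))\<^sup>2"
      by (intro power_strict_mono) auto
    then show ?thesis
      using \<open>k \<in> K\<close> by auto
  qed
  then show ?thesis
    using that by metis
qed

lemma convex_minimizing_sequence_Cauchy:
  fixes y :: "'a::complex_inner"
  assumes "convex K" and k: "\<And>n. k n \<in> K" and d: "0 \<le> d" "\<And>x. x \<in> K \<Longrightarrow> d \<le> norm (y - x)"
    and near: "\<And>n. (norm (y - k n))\<^sup>2 < d\<^sup>2 + inverse (real (Suc n))"
  shows "Cauchy k"
proof (rule CauchyI)
  fix e :: real
  assume "0 < e"
  then obtain M where M: "inverse (real (Suc M)) < e\<^sup>2 / 4"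
    by (metis reals_Archimedean zero_less_divide_iff zero_less_numeral zero_less_power)
  have "norm (k m - k n) < e" if "M \<le> m" "M \<le> n" for m n
  proof -
    have "(1/2) *\<^sub>R (k m + k n) \<in> K"
      using convexD[OF assms(1) k k, of "1/2" "1/2" m n] by (simp add: scaleR_add_right)
    then have "(norm (k m - k n))\<^sup>2 \<le> 2 * (norm (y - k m))\<^sup>2 + 2 * (norm (y - k n))\<^sup>2 - 4 * d\<^sup>2"
      by (intro norm_diff_le_via_midpoint d)
    also have "\<dots> < 4 * inverse (real (Suc M))"
    proof -
      have "inverse (real (Suc m)) \<le> inverse (real (Suc M))"
        "inverse (real (Suc n)) \<le> inverse (real (Suc M))"
        using that by (intro le_imp_inverse_le; simp)+
      then show ?thesis
        using near[of m] near[of n] by linarith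
    qed
    finally have "(norm (k m - k n))\<^sup>2 < e\<^sup>2"
      using M by simp
    then show ?thesis
      using \<open>0 < e\<close> by (auto intro: power2_less_imp_less)
  qed
  then show "\<exists>M. \<forall>m\<ge>M. \<forall>n\<ge>M. norm (k m - k n) < e"
    by blast
qed

lemma closed_convex_nearest_point_exists:
  fixes y :: "'a::chilbert"
  assumes "closed K" "convex K" "K \<noteq> {}"
  obtains p where "p \<in> K" "\<And>k. k \<in> K \<Longrightarrow> norm (y - p) \<le> norm (y - k)"
proof -
  define d where "d = infdist y K"
  have d: "0 \<le> d" "\<And>k. k \<in> K \<Longrightarrow> d \<le> norm (y - k)"
    using infdist_le[of _ K y] by (simp_all add: d_def infdist_nonneg dist_norm)
  obtain k where k: "\<And>n. k n \<in> K" and near: "\<And>n. (norm (y - k n))\<^sup>2 < d\<^sup>2 + inverse (real (Suc n))"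
    using infdist_minimizing_sequence[OF assms(3), of y] by (auto simp: d_def dist_norm)
  then obtain p where lim: "k \<longlonglongrightarrow> p"
    using convex_minimizing_sequence_Cauchy[OF assms(2) k d near] Cauchy_convergent_iff convergent_def
    by blast
  have "(norm (y - p))\<^sup>2 \<le> d\<^sup>2 + 0"
  proof (rule LIMSEQ_le)
    show "(\<lambda>n. (norm (y - k n))\<^sup>2) \<longlonglongrightarrow> (norm (y - p))\<^sup>2"
      by (intro tendsto_intros lim)
    show "(\<lambda>n. d\<^sup>2 + inverse (real (Suc n))) \<longlonglongrightarrow> d\<^sup>2 + 0"
      by (intro tendsto_intros LIMSEQ_inverse_real_of_nat)
    show "\<exists>N. \<forall>n\<ge>N. (norm (y - k n))\<^sup>2 \<le> d\<^sup>2 + inverse (real (Suc n))"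
      using near less_imp_le by blast
  qed
  then have "(norm (y - p))\<^sup>2 \<le> d\<^sup>2"
    by simp
  then have "norm (y - p) \<le> d"
    using d(1) by (rule power2_le_imp_le)
  moreover have "p \<in> K"
    using closed_sequentially[OF assms(1) _ lim] k by blast
  ultimately show ?thesis
    using that d(2) by force
qed

lemma nearest_point_orthogonal_subspace:
  fixes y p :: "'a::complex_inner"
  assumes add: "\<And>a b. a \<in> K \<Longrightarrow> b \<in> K \<Longrightarrow> a + b \<in> K"
    and scale: "\<And>c a. a \<in> K \<Longrightarrow> c *\<^sub>C a \<in> K"
    and "p \<in> K" and nearest: "\<And>k. k \<in> K \<Longrightarrow> norm (y - p) \<le> norm (y - k)"
    and "k \<in> K"
  shows "cinner k (y - p) = 0"
proof (cases "k = 0")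
  case False
  define t where "t = cinner k (y - p) / complex_of_real ((norm k)\<^sup>2)"
  have "norm (y - p) \<le> norm (y - p - t *\<^sub>C k)"
    using nearest[of "p + t *\<^sub>C k"] add[OF \<open>p \<in> K\<close> scale[OF \<open>k \<in> K\<close>]]
    by (simp add: algebra_simps)
  then have "(norm (y - p))\<^sup>2 \<le> (norm (y - p - t *\<^sub>C k))\<^sup>2"
    by (simp add: power_mono)
  also have "\<dots> = (norm (y - p))\<^sup>2 - (cmod (cinner k (y - p)))\<^sup>2 / (norm k)\<^sup>2"
    unfolding t_def by (rule power2_norm_diff_projection[OF False])
  finally have "(cmod (cinner k (y - p)))\<^sup>2 / (norm k)\<^sup>2 \<le> 0"
    by simp
  then show ?thesis
    using False by (simp add: divide_le_0_iff)
qed simp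

lemma functional_eq_cinner_if_orthogonal_kernel:
  fixes f :: "'a::complex_inner \<Rightarrow> complex"
  assumes add: "\<And>x y. f (x + y) = f x + f y"
    and scale: "\<And>c x. f (c *\<^sub>C x) = c * f x"
    and orth: "\<And>k. f k = 0 \<Longrightarrow> cinner k w = 0" and "w \<noteq> 0"
  shows "f x = cinner (cnj (f w / cinner w w) *\<^sub>C w) x"
proof -
  have "f (f x *\<^sub>C w - f w *\<^sub>C x) = 0"
    using add[of "f x *\<^sub>C w - f w *\<^sub>C x" "f w *\<^sub>C x"] by (simp add: scale mult.commute)
  then have "cinner (f x *\<^sub>C w - f w *\<^sub>C x) w = 0"
    by (rule orth)
  then have "cnj (f x) * cinner w w = cnj (f w) * cinner x w"
    by (simp add: cinner_diff_left cinner_scaleC_left)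
  then have "f x * cinner w w = f w * cinner w x"
    by (metis cinner_commute complex_cnj_cnj complex_cnj_mult)
  moreover have "cinner w w \<noteq> 0"
    using \<open>w \<noteq> 0\<close> cinner_eq_zero_iff by blast
  ultimately show ?thesis
    by (simp add: cinner_scaleC_left field_simps)
qed

lemma riesz_representation:
  fixes f :: "'a::chilbert \<Rightarrow> complex"
  assumes add: "\<And>x y. f (x + y) = f x + f y"
    and scale: "\<And>c x. f (c *\<^sub>C x) = c * f x"
    and bounded: "\<And>x. cmod (f x) \<le> K * norm x"
  shows "\<exists>z. \<forall>x. f x = cinner z x"
proof (cases "\<forall>x. f x = 0")
  case False
  then obtain y where "f y \<noteq> 0"
    by blast
  have "bounded_linear f"
    using scale[of "complex_of_real r" for r]
    by (intro bounded_linear_intro[where K=K]) (auto simp: add bounded mult.commute scaleR_scaleC scaleR_conv_of_real)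
  define Ker where "Ker = {x. f x = 0}"
  have "closed Ker" "convex Ker" "0 \<in> Ker"
    using scale[of 0 0] unfolding Ker_def
    by (auto intro!: closed_Collect_eq linear_continuous_on \<open>bounded_linear f\<close> subspace_imp_convex
        linear_subspace_kernel bounded_linear.linear)
  then obtain p where "p \<in> Ker" and nearest: "\<And>k. k \<in> Ker \<Longrightarrow> norm (y - p) \<le> norm (y - k)"
    using closed_convex_nearest_point_exists by blast
  have "cinner k (y - p) = 0" if "f k = 0" for k
    by (rule nearest_point_orthogonal_subspace[OF _ _ \<open>p \<in> Ker\<close> nearest])
      (use that in \<open>auto simp: Ker_def add scale\<close>)
  moreover have "y - p \<noteq> 0"
    using \<open>f y \<noteq> 0\<close> \<open>p \<in> Ker\<close> by (auto simp: Ker_def)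
  ultimately show ?thesis
    using functional_eq_cinner_if_orthogonal_kernel[OF add scale] by blast
qed (intro exI[of _ 0], simp)

lemma clinear_opI:
  assumes "\<And>x y. T (x + y) = T x + T y" "\<And>c x. T (c *\<^sub>C x) = c *\<^sub>C T x"
  shows "clinear_op T"
  using assms unfolding clinear_op_def by auto

lemma clinear_opD:
  assumes "clinear_op T"
  shows "T (x + y) = T x + T y" "T (c *\<^sub>C x) = c *\<^sub>C T x"
  using assms unfolding clinear_op_def by auto

lemma clinear_op_scaleR: "clinear_op T \<Longrightarrow> T (r *\<^sub>R x) = r *\<^sub>R T x"
  using clinear_opD(2)[of T "complex_of_real r" x] by (simp add: scaleR_scaleC)

lemma clinear_op_diff: "clinear_op T \<Longrightarrow> T (x - y) = T x - T y"
  using clinear_opD(1)[of T "x - y" y] by (simp add: eq_diff_eq)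

lemma bounded_opI: "clinear_op T \<Longrightarrow> (\<And>x. norm (T x) \<le> K * norm x) \<Longrightarrow> bounded_op T"
  unfolding bounded_op_def by auto

lemma bounded_op_clinear: "bounded_op T \<Longrightarrow> clinear_op T"
  unfolding bounded_op_def by simp

lemma bounded_op_bounded_linear:
  assumes "bounded_op T"
  shows "bounded_linear T"
proof -
  obtain K where "\<And>x. norm (T x) \<le> K * norm x"
    using assms unfolding bounded_op_def by auto
  then show ?thesis
    using bounded_op_clinear[OF assms]
    by (intro bounded_linear_intro[where K=K]) (auto simp: clinear_opD clinear_op_scaleR mult.commute)
qed

lemma bounded_op_norm_le: "bounded_op T \<Longrightarrow> norm (T x) \<le> opnorm T * norm x"
  unfolding opnorm_def by (rule onorm[OF bounded_op_bounded_linear])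

lemma opnorm_nonneg: "bounded_op T \<Longrightarrow> 0 \<le> opnorm T"
  unfolding opnorm_def by (rule onorm_pos_le[OF bounded_op_bounded_linear])

lemma bounded_op_compose:
  assumes A: "bounded_op A" and B: "bounded_op B"
  shows "bounded_op (\<lambda>x. A (B x))"
proof (rule bounded_opI)
  show "clinear_op (\<lambda>x. A (B x))"
    using bounded_op_clinear[OF A] bounded_op_clinear[OF B]
    by (intro clinear_opI) (simp_all add: clinear_opD)
  show "norm (A (B x)) \<le> (opnorm A * opnorm B) * norm x" for x
  proof -
    have "norm (A (B x)) \<le> opnorm A * norm (B x)"
      by (rule bounded_op_norm_le[OF A])
    also have "\<dots> \<le> opnorm A * (opnorm B * norm x)"
      by (intro mult_left_mono bounded_op_norm_le[OF B] opnorm_nonneg[OF A])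
    finally show ?thesis
      by (simp add: mult.assoc)
  qed
qed

lemma bounded_op_id: "bounded_op (\<lambda>x. x)"
  by (rule bounded_opI[where K=1]) (simp_all add: clinear_op_def)

lemma bounded_op_funpow: "bounded_op P \<Longrightarrow> bounded_op (P ^^ n)"
  by (induction n) (simp_all add: bounded_op_id[unfolded id_def[symmetric]]
      bounded_op_compose comp_def)

lemma bounded_op_add:
  assumes A: "bounded_op A" and B: "bounded_op B"
  shows "bounded_op (\<lambda>x. A x + B x)"
proof (rule bounded_opI)
  show "clinear_op (\<lambda>x. A x + B x)"
    using bounded_op_clinear[OF A] bounded_op_clinear[OF B]
    by (intro clinear_opI) (simp_all add: clinear_opD scaleC_add_right algebra_simps)
  show "norm (A x + B x) \<le> (opnorm A + opnorm B) * norm x" for x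
    using norm_triangle_ineq[of "A x" "B x"] bounded_op_norm_le[OF A, of x]
      bounded_op_norm_le[OF B, of x]
    by (simp add: algebra_simps)
qed

lemma bounded_op_scaleC:
  assumes A: "bounded_op A"
  shows "bounded_op (\<lambda>x. c *\<^sub>C A x)"
proof (rule bounded_opI)
  show "clinear_op (\<lambda>x. c *\<^sub>C A x)"
    using bounded_op_clinear[OF A]
    by (intro clinear_opI) (simp_all add: clinear_opD scaleC_add_right scaleC_scaleC mult.commute)
  show "norm (c *\<^sub>C A x) \<le> (cmod c * opnorm A) * norm x" for x
    using bounded_op_norm_le[OF A, of x] by (simp add: norm_scaleC mult.assoc mult_left_mono)
qed

lemma bounded_op_minus: "bounded_op A \<Longrightarrow> bounded_op (\<lambda>x. - A x)"
  using bounded_op_scaleC[of A "-1"] by (simp add: scaleC_minus_left scaleC_one)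

lemma bounded_op_diff: "bounded_op A \<Longrightarrow> bounded_op B \<Longrightarrow> bounded_op (\<lambda>x. A x - B x)"
  using bounded_op_add[of A "\<lambda>x. - B x"] bounded_op_minus[of B] by simp

definition is_adjoint :: "('a::complex_inner \<Rightarrow> 'a) \<Rightarrow> ('a \<Rightarrow> 'a) \<Rightarrow> bool" where
  "is_adjoint T A \<longleftrightarrow> bounded_op A \<and> (\<forall>x y. cinner (T x) y = cinner x (A y))"

lemma is_adjoint_bounded: "is_adjoint T A \<Longrightarrow> bounded_op A"
  unfolding is_adjoint_def by simp

lemma is_adjointD: "is_adjoint T A \<Longrightarrow> cinner (T x) y = cinner x (A y)"
  unfolding is_adjoint_def by auto

lemma is_adjoint_unique:
  assumes "is_adjoint T A" "is_adjoint T B"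
  shows "A = B"
proof
  fix y
  show "A y = B y"
    using assms by (intro cinner_ext) (metis is_adjointD)
qed

lemma adj_eqI:
  assumes "is_adjoint T A"
  shows "adj T = A"
proof -
  have "is_adjoint T (adj T)"
    using assms unfolding adj_def is_adjoint_def
    by (rule someI[where P="\<lambda>A. bounded_op A \<and> (\<forall>x y. cinner (T x) y = cinner x (A y))"])
  then show ?thesis
    using assms is_adjoint_unique by blast
qed

lemma is_adjoint_compose:
  "is_adjoint A A' \<Longrightarrow> is_adjoint B B' \<Longrightarrow> is_adjoint (\<lambda>x. A (B x)) (\<lambda>y. B' (A' y))"
  unfolding is_adjoint_def by (simp add: bounded_op_compose)

lemma is_adjoint_scaleC:
  assumes "is_adjoint T A"
  shows "is_adjoint (\<lambda>x. c *\<^sub>C T x) (\<lambda>y. cnj c *\<^sub>C A y)"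
  using assms unfolding is_adjoint_def
  by (auto simp: bounded_op_scaleC cinner_scaleC_left cinner_scaleC_right)

lemma bounded_op_cinner_representable:
  fixes T :: "'a::chilbert \<Rightarrow> 'a"
  assumes T: "bounded_op T"
  shows "\<exists>z. \<forall>x. cinner y (T x) = cinner z x"
proof (rule riesz_representation[where K="norm y * opnorm T"])
  show "cmod (cinner y (T x)) \<le> norm y * opnorm T * norm x" for x
  proof -
    have "cmod (cinner y (T x)) \<le> norm y * norm (T x)"
      by (rule cauchy_schwarz)
    also have "\<dots> \<le> norm y * (opnorm T * norm x)"
      by (intro mult_left_mono bounded_op_norm_le[OF T]) simp
    finally show ?thesis
      by (simp add: mult.assoc)
  qed
qed (simp_all add: clinear_opD[OF bounded_op_clinear[OF T]] cinner_add_right cinner_scaleC_right)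

lemma adjoint_norm_le:
  assumes T: "bounded_op T" and A: "\<And>x y. cinner (T x) y = cinner x (A y)"
  shows "norm (A y) \<le> opnorm T * norm y"
proof (cases "A y = 0")
  case False
  have "(norm (A y))\<^sup>2 = Re (cinner (T (A y)) y)"
    by (simp add: power2_norm_eq_cinner A)
  also have "\<dots> \<le> norm (T (A y)) * norm y"
    by (rule order_trans[OF complex_Re_le_cmod cauchy_schwarz])
  also have "\<dots> \<le> opnorm T * norm (A y) * norm y"
    by (intro mult_right_mono bounded_op_norm_le[OF T]) simp
  finally have "norm (A y) * norm (A y) \<le> (opnorm T * norm y) * norm (A y)"
    by (simp add: power2_eq_square mult_ac)
  then show ?thesis
    using False by simp
qed (simp add: opnorm_nonneg[OF T])

lemma bounded_op_has_adjoint: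
  fixes T :: "'a::chilbert \<Rightarrow> 'a"
  assumes T: "bounded_op T"
  obtains A where "is_adjoint T A"
proof -
  obtain A where "\<And>y x. cinner y (T x) = cinner (A y) x"
    using bounded_op_cinner_representable[OF T] by metis
  then have A: "\<And>x y. cinner (T x) y = cinner x (A y)"
    by (metis cinner_commute)
  have "clinear_op A"
    by (intro clinear_opI; rule cinner_ext)
      (simp_all add: A[symmetric] cinner_add_right cinner_scaleC_right)
  then have "bounded_op A"
    using adjoint_norm_le[OF T A] by (rule bounded_opI)
  then have "is_adjoint T A"
    by (simp add: is_adjoint_def A)
  then show ?thesis
    by (rule that)
qed

lemma self_adjoint_op_is_adjoint:
  fixes T :: "'a::chilbert \<Rightarrow> 'a"
  assumes "self_adjoint_op T"
  shows "is_adjoint T T"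
proof -
  obtain A where "is_adjoint T A"
    using assms bounded_op_has_adjoint unfolding self_adjoint_op_def by blast
  moreover have "adj T = T"
    using assms unfolding self_adjoint_op_def by simp
  ultimately show ?thesis
    using adj_eqI by metis
qed

lemma bounded_op_adj:
  fixes T :: "'a::chilbert \<Rightarrow> 'a"
  assumes "bounded_op T"
  shows "bounded_op (adj T)"
proof -
  obtain A where "is_adjoint T A"
    using bounded_op_has_adjoint[OF assms] by blast
  then show ?thesis
    using adj_eqI unfolding is_adjoint_def by metis
qed

lemma is_adjoint_funpow:
  assumes "is_adjoint P P"
  shows "is_adjoint (P ^^ n) (P ^^ n)"
proof (induction n)
  case 0
  show ?case
    using bounded_op_id by (simp add: is_adjoint_def id_def)
next
  case (Suc n)
  show ?case
    unfolding is_adjoint_def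
  proof (intro conjI allI)
    show "bounded_op (P ^^ Suc n)"
      using assms bounded_op_funpow unfolding is_adjoint_def by blast
    show "cinner ((P ^^ Suc n) x) y = cinner x ((P ^^ Suc n) y)" for x y
      by (simp add: is_adjointD[OF assms] is_adjointD[OF Suc] funpow_swap1)
  qed
qed

section \<open>Numerical radius of self-adjoint and skew-adjoint operators\<close>

lemma is_norm_on_ops_nonneg: "is_norm_on_ops N \<Longrightarrow> bounded_op A \<Longrightarrow> 0 \<le> N A"
  unfolding is_norm_on_ops_def by blast

lemma is_norm_on_ops_triangle:
  "is_norm_on_ops N \<Longrightarrow> bounded_op A \<Longrightarrow> bounded_op B \<Longrightarrow> N (\<lambda>x. A x + B x) \<le> N A + N B"
  unfolding is_norm_on_ops_def by blast

lemma is_norm_on_ops_scaleC: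
  "is_norm_on_ops N \<Longrightarrow> bounded_op A \<Longrightarrow> N (\<lambda>x. c *\<^sub>C A x) = cmod c * N A"
  unfolding is_norm_on_ops_def by blast

lemma SUP_abs_mult_eq:
  fixes f :: "real \<Rightarrow> real"
  assumes "0 \<le> c" "\<And>t. \<bar>f t\<bar> \<le> 1" "\<bar>f t\<^sub>0\<bar> = 1"
  shows "(SUP t. \<bar>f t\<bar> * c) = c"
proof (rule cSup_eq_maximum)
  show "c \<in> range (\<lambda>t. \<bar>f t\<bar> * c)"
    using assms(3) by (intro range_eqI[of _ _ t\<^sub>0]) simp
qed (use assms(1,2) in \<open>auto intro: mult_left_le_one_le\<close>)

lemma wN_self_adjoint:
  assumes N: "is_norm_on_ops N" and D: "is_adjoint D D"
  shows "wN N D = N D"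
proof -
  have "bounded_op D"
    using D by (rule is_adjoint_bounded)
  have "ReOp (\<lambda>x. cis t *\<^sub>C D x) = (\<lambda>x. complex_of_real (cos t) *\<^sub>C D x)" for t
  proof -
    have "adj (\<lambda>x. cis t *\<^sub>C D x) = (\<lambda>y. cnj (cis t) *\<^sub>C D y)"
      by (rule adj_eqI[OF is_adjoint_scaleC[OF D]])
    moreover have "(1/2) * (cis t + cnj (cis t)) = complex_of_real (cos t)"
      by (simp add: complex_eq_iff)
    ultimately show ?thesis
      unfolding ReOp_def by (simp add: scaleC_add_left[symmetric] scaleC_scaleC)
  qed
  then have "wN N D = (SUP t. \<bar>cos t\<bar> * N D)"
    unfolding wN_def using is_norm_on_ops_scaleC[OF N \<open>bounded_op D\<close>] by simp
  also have "\<dots> = N D"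
    using is_norm_on_ops_nonneg[OF N \<open>bounded_op D\<close>] by (rule SUP_abs_mult_eq[where t\<^sub>0=0]) simp_all
  finally show ?thesis .
qed

lemma wN_skew_adjoint:
  assumes N: "is_norm_on_ops N" and D: "is_adjoint D (\<lambda>x. - D x)"
  shows "wN N D = N D"
proof -
  have "bounded_op D"
    using D bounded_op_minus unfolding is_adjoint_def by fastforce
  have "ReOp (\<lambda>x. cis t *\<^sub>C D x) = (\<lambda>x. (\<i> * complex_of_real (sin t)) *\<^sub>C D x)" for t
  proof -
    have "adj (\<lambda>x. cis t *\<^sub>C D x) = (\<lambda>y. cnj (cis t) *\<^sub>C (- D y))"
      by (rule adj_eqI[OF is_adjoint_scaleC[OF D]])
    moreover have "(1/2) * (cis t - cnj (cis t)) = \<i> * complex_of_real (sin t)"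
      by (simp add: complex_eq_iff)
    ultimately show ?thesis
      unfolding ReOp_def
      by (simp add: scaleC_minus_right scaleC_diff_left[symmetric] scaleC_scaleC)
  qed
  then have "wN N D = (SUP t. \<bar>sin t\<bar> * N D)"
    unfolding wN_def using is_norm_on_ops_scaleC[OF N \<open>bounded_op D\<close>] by (simp add: norm_mult)
  also have "\<dots> = N D"
    using is_norm_on_ops_nonneg[OF N \<open>bounded_op D\<close>]
    by (rule SUP_abs_mult_eq[where t\<^sub>0="pi/2"]) simp_all
  finally show ?thesis .
qed

lemma is_adjoint_anticommutator:
  assumes T: "is_adjoint T T" and S: "is_adjoint S S"
  shows "is_adjoint (\<lambda>x. T (S x) + S (T x)) (\<lambda>x. T (S x) + S (T x))"
  unfolding is_adjoint_def
proof (intro conjI allI)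
  have "bounded_op T" "bounded_op S"
    using T S by (simp_all add: is_adjoint_bounded)
  then show "bounded_op (\<lambda>x. T (S x) + S (T x))"
    by (simp add: bounded_op_add bounded_op_compose)
  show "cinner (T (S x) + S (T x)) y = cinner x (T (S y) + S (T y))" for x y
    by (simp add: cinner_add_left cinner_add_right is_adjointD[OF T] is_adjointD[OF S] add.commute)
qed

lemma is_adjoint_commutator:
  assumes T: "is_adjoint T T" and S: "is_adjoint S S"
  shows "is_adjoint (\<lambda>x. T (S x) - S (T x)) (\<lambda>x. - (T (S x) - S (T x)))"
  unfolding is_adjoint_def
proof (intro conjI allI)
  have "bounded_op T" "bounded_op S"
    using T S by (simp_all add: is_adjoint_bounded)
  then show "bounded_op (\<lambda>x. - (T (S x) - S (T x)))"
    by (simp add: bounded_op_minus bounded_op_diff bounded_op_compose)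
  show "cinner (T (S x) - S (T x)) y = cinner x (- (T (S y) - S (T y)))" for x y
    by (simp add: cinner_diff_left cinner_diff_right cinner_minus_right
        is_adjointD[OF T] is_adjointD[OF S])
qed

lemma algebra_norm_compose_le:
  "algebra_norm N \<Longrightarrow> bounded_op A \<Longrightarrow> bounded_op B \<Longrightarrow> N (\<lambda>x. A (B x)) \<le> N A * N B"
  unfolding algebra_norm_def comp_def by blast

lemma algebra_norm_anticommutator_le:
  assumes N: "algebra_norm N" and T: "bounded_op T" and S: "bounded_op S"
  shows "N (\<lambda>x. T (S x) + S (T x)) \<le> 2 * N T * N S"
proof -
  have "is_norm_on_ops N"
    using N unfolding algebra_norm_def by simp
  then have "N (\<lambda>x. T (S x) + S (T x)) \<le> N (\<lambda>x. T (S x)) + N (\<lambda>x. S (T x))"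
    by (rule is_norm_on_ops_triangle[OF _ bounded_op_compose[OF T S] bounded_op_compose[OF S T]])
  also have "\<dots> \<le> N T * N S + N S * N T"
    by (intro add_mono algebra_norm_compose_le N T S)
  finally show ?thesis
    by (simp add: mult_ac)
qed

lemma algebra_norm_commutator_le:
  assumes N: "algebra_norm N" and T: "bounded_op T" and S: "bounded_op S"
  shows "N (\<lambda>x. T (S x) - S (T x)) \<le> 2 * N T * N S"
proof -
  have N': "is_norm_on_ops N"
    using N unfolding algebra_norm_def by simp
  have "(\<lambda>x. T (S x) - S (T x)) = (\<lambda>x. T (S x) + (- 1) *\<^sub>C S (T x))"
    by (simp add: scaleC_minus_left scaleC_one)
  then have "N (\<lambda>x. T (S x) - S (T x)) \<le> N (\<lambda>x. T (S x)) + N (\<lambda>x. (- 1) *\<^sub>C S (T x))"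
    using is_norm_on_ops_triangle[OF N' bounded_op_compose[OF T S]
        bounded_op_scaleC[OF bounded_op_compose[OF S T]]]
    by simp
  also have "N (\<lambda>x. (- 1) *\<^sub>C S (T x)) = N (\<lambda>x. S (T x))"
    using is_norm_on_ops_scaleC[OF N' bounded_op_compose[OF S T], of "- 1"] by simp
  also have "N (\<lambda>x. T (S x)) + \<dots> \<le> N T * N S + N S * N T"
    by (intro add_mono algebra_norm_compose_le N T S)
  finally show ?thesis
    by (simp add: mult_ac)
qed

section \<open>Self-adjoint contractions are real parts of unitaries\<close>

definition sqrt_one_minus_coeff :: "nat \<Rightarrow> real" where
  "sqrt_one_minus_coeff n = ((1/2) gchoose n) * (- 1) ^ n"

lemma gbinomial_Suc_mult: "of_nat (Suc k) * (a gchoose Suc k) = (a - of_nat k) * (a gchoose k)"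
  by (subst gbinomial_absorption) (rule gbinomial_absorb_comp[symmetric])

lemma sqrt_one_minus_coeff_0 [simp]: "sqrt_one_minus_coeff 0 = 1"
  by (simp add: sqrt_one_minus_coeff_def)

lemma sqrt_one_minus_coeff_nonpos: "n \<ge> 1 \<Longrightarrow> sqrt_one_minus_coeff n \<le> 0"
proof (induction n rule: dec_induct)
  case (step n)
  have "real (Suc n) * sqrt_one_minus_coeff (Suc n)
      = - ((real (Suc n) * ((1/2) gchoose Suc n)) * (-1) ^ n)"
    by (simp add: sqrt_one_minus_coeff_def)
  also have "\<dots> = (real n - 1/2) * sqrt_one_minus_coeff n"
    unfolding gbinomial_Suc_mult by (simp add: sqrt_one_minus_coeff_def algebra_simps)
  also have "\<dots> \<le> 0"
    using step by (simp add: mult_nonneg_nonpos)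
  finally show ?case
    by (simp add: mult_le_0_iff)
qed (simp add: sqrt_one_minus_coeff_def)

lemma sum_sqrt_one_minus_coeff_nonneg: "(\<Sum>k\<le>m. sqrt_one_minus_coeff k) \<ge> 0"
proof -
  have "(\<Sum>k\<le>m. sqrt_one_minus_coeff k) = (-1) ^ m * ((- (1/2)) gchoose m)"
    unfolding sqrt_one_minus_coeff_def gbinomial_sum_lower_neg by simp
  also have "\<dots> = (1/2 + real m - 1) gchoose m"
    unfolding gbinomial_minus mult.assoc[symmetric] minus_one_mult_self by simp
  also have "\<dots> = pochhammer (1/2) m / fact m"
    by (simp add: gbinomial_pochhammer')
  also have "\<dots> \<ge> 0"
    by (simp add: pochhammer_nonneg)
  finally show ?thesis .
qed

lemma summable_abs_sqrt_one_minus_coeff: "summable (\<lambda>n. \<bar>sqrt_one_minus_coeff n\<bar>)"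
proof (rule summableI_nonneg_bounded[where x=2])
  show "(\<Sum>k<n. \<bar>sqrt_one_minus_coeff k\<bar>) \<le> 2" for n
  proof (cases n)
    case (Suc m)
    have "(\<Sum>k\<le>m. \<bar>sqrt_one_minus_coeff k\<bar>) = 2 - (\<Sum>k\<le>m. sqrt_one_minus_coeff k)"
      by (induction m) (simp_all add: abs_of_nonpos sqrt_one_minus_coeff_nonpos)
    then show ?thesis
      using Suc sum_sqrt_one_minus_coeff_nonneg[of m] by (simp add: lessThan_Suc_atMost)
  qed simp
qed simp

lemma sqrt_one_minus_coeff_convolution:
  "(\<Sum>i\<le>k. sqrt_one_minus_coeff i * sqrt_one_minus_coeff (k - i))
     = (if k = 0 then 1 else if k = 1 then -1 else 0)"
proof -
  have "(\<Sum>i\<le>k. sqrt_one_minus_coeff i * sqrt_one_minus_coeff (k - i))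
      = (\<Sum>i\<le>k. ((1/2) gchoose i) * ((1/2) gchoose (k - i))) * (-1) ^ k"
    unfolding sqrt_one_minus_coeff_def sum_distrib_right
    by (intro sum.cong refl) (simp add: power_add[symmetric] mult_ac)
  also have "(\<Sum>i\<le>k. ((1/2::real) gchoose i) * ((1/2) gchoose (k - i))) = (1/2 + 1/2) gchoose k"
    using gbinomial_Vandermonde[of "1/2::real" "1/2" k] by (simp add: atLeast0AtMost)
  also have "(1/2 + 1/2 :: real) gchoose k = of_nat (1 choose k)"
    using binomial_gbinomial[of 1 k, where 'a=real] by simp
  finally show ?thesis
    by (cases k) (auto simp: binomial_eq_0)
qed

lemma Cauchy_product_corner_tendsto_zero:
  fixes a :: "nat \<Rightarrow> 'a::real_normed_vector" and b :: "nat \<Rightarrow> 'b::real_normed_vector"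
  assumes "summable (\<lambda>k. norm (a k))" "summable (\<lambda>k. norm (b k))"
  shows "(\<lambda>n. \<Sum>(i, j)\<in>{..<n} \<times> {..<n} - {(i, j). i + j < n}. norm (a i) * norm (b j))
    \<longlonglongrightarrow> 0"
proof -
  let ?f = "\<lambda>(i, j). norm (a i) * norm (b j)"
  have "(\<lambda>n. sum ?f ({..<n} \<times> {..<n})) \<longlonglongrightarrow> (\<Sum>k. norm (a k)) * (\<Sum>k. norm (b k))"
    using tendsto_mult[OF summable_LIMSEQ[OF assms(1)] summable_LIMSEQ[OF assms(2)]]
    by (simp add: sum_product sum.cartesian_product)
  moreover have "(\<lambda>n. sum ?f {(i, j). i + j < n}) \<longlonglongrightarrow> (\<Sum>k. norm (a k)) * (\<Sum>k. norm (b k))"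
    using Series.Cauchy_product_sums[of "\<lambda>k. norm (a k)" "\<lambda>k. norm (b k)"] assms
    by (simp add: sums_def sum.triangle_reindex)
  ultimately have "(\<lambda>n. sum ?f ({..<n} \<times> {..<n}) - sum ?f {(i, j). i + j < n}) \<longlonglongrightarrow> 0"
    using tendsto_diff by fastforce
  moreover have "{(i, j). i + j < n} \<subseteq> {..<n} \<times> {..<n}" for n :: nat
    by auto
  ultimately show ?thesis
    by (simp add: sum_diff)
qed

lemma (in bounded_bilinear) Cauchy_product_sums:
  assumes a: "summable (\<lambda>k. norm (a k))" "a sums A"
    and b: "summable (\<lambda>k. norm (b k))" "b sums B"
  shows "(\<lambda>k. \<Sum>i\<le>k. prod (a i) (b (k - i))) sums prod A B"
proof -
  define Sq where "Sq n = {..<n} \<times> {..<n}" for n :: nat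
  define Tri where "Tri n = {(i, j). i + j < n}" for n :: nat
  have Tri_Sq: "Tri n \<subseteq> Sq n" and fin: "finite (Sq n)" for n
    by (auto simp: Tri_def Sq_def)
  let ?g = "\<lambda>(i, j). prod (a i) (b j)"
  let ?f = "\<lambda>(i, j). norm (a i) * norm (b j)"
  obtain K where K: "\<And>x y. norm (prod x y) \<le> norm x * norm y * K"
    using bounded by blast
  have Sq_g: "(\<lambda>n. sum ?g (Sq n)) \<longlonglongrightarrow> prod A B"
  proof -
    have "prod (\<Sum>i<n. a i) (\<Sum>j<n. b j) = sum ?g (Sq n)" for n
      unfolding sum_left by (simp add: Sq_def sum_right sum.cartesian_product)
    moreover have "(\<lambda>n. prod (\<Sum>i<n. a i) (\<Sum>j<n. b j)) \<longlonglongrightarrow> prod A B"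
      using a(2) b(2) unfolding sums_def by (rule tendsto)
    ultimately show ?thesis
      by simp
  qed
  have corner_bound: "norm (sum ?g (Sq n - Tri n)) \<le> norm (sum ?f (Sq n - Tri n)) * K" for n
  proof -
    have "norm (sum ?g (Sq n - Tri n)) \<le> (\<Sum>p\<in>Sq n - Tri n. ?f p * K)"
      by (rule order_trans[OF norm_sum sum_mono]) (auto simp: K)
    moreover have "0 \<le> sum ?f (Sq n - Tri n)"
      by (rule sum_nonneg) auto
    ultimately show ?thesis
      by (simp add: sum_distrib_right)
  qed
  have "(\<lambda>n. sum ?f (Sq n - Tri n)) \<longlonglongrightarrow> 0"
    using Cauchy_product_corner_tendsto_zero[OF a(1) b(1)] by (simp add: Sq_def Tri_def)
  then have "(\<lambda>n. sum ?g (Sq n - Tri n)) \<longlonglongrightarrow> 0"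
    by (rule tendsto_0_le[where K=K]) (intro always_eventually allI corner_bound)
  then have "(\<lambda>n. sum ?g (Sq n) - sum ?g (Tri n)) \<longlonglongrightarrow> 0"
    by (simp add: sum_diff fin Tri_Sq)
  from tendsto_diff[OF Sq_g this]
  have "(\<lambda>n. sum ?g (Tri n)) \<longlonglongrightarrow> prod A B"
    by simp
  then show ?thesis
    by (simp add: sums_def Tri_def sum.triangle_reindex)
qed

lemma norm_funpow_le:
  fixes P :: "'a::real_normed_vector \<Rightarrow> 'a"
  assumes "\<And>x. norm (P x) \<le> norm x"
  shows "norm ((P ^^ n) x) \<le> norm x"
proof (induction n)
  case (Suc n)
  then show ?case
    using assms[of "(P ^^ n) x"] by simp
qed simp

instance chilbert \<subseteq> banach ..

definition sqrt_one_minus_op :: "('a::chilbert \<Rightarrow> 'a) \<Rightarrow> 'a \<Rightarrow>\<^sub>L 'a" where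
  "sqrt_one_minus_op P = (\<Sum>n. sqrt_one_minus_coeff n *\<^sub>R Blinfun (P ^^ n))"

context
  fixes P :: "'a::chilbert \<Rightarrow> 'a"
  assumes P_adj: "is_adjoint P P" and P_contraction: "\<And>x. norm (P x) \<le> norm x"
begin

lemma blinfun_apply_Blinfun_funpow [simp]: "blinfun_apply (Blinfun (P ^^ n)) = P ^^ n"
  using bounded_op_funpow[OF is_adjoint_bounded[OF P_adj]]
  by (intro bounded_linear_Blinfun_apply bounded_op_bounded_linear)

lemma Blinfun_funpow_compose: "Blinfun (P ^^ i) o\<^sub>L Blinfun (P ^^ j) = Blinfun (P ^^ (i + j))"
  by (rule blinfun_eqI)
    (metis blinfun_apply_Blinfun_funpow blinfun_apply_blinfun_compose comp_apply funpow_add)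

lemma summable_norm_sqrt_one_minus_series:
  "summable (\<lambda>n. norm (sqrt_one_minus_coeff n *\<^sub>R Blinfun (P ^^ n)))"
proof (rule summable_comparison_test[OF _ summable_abs_sqrt_one_minus_coeff])
  have "norm (Blinfun (P ^^ n)) \<le> 1" for n
    by (rule norm_blinfun_bound) (simp_all add: norm_funpow_le P_contraction)
  then show "\<exists>N. \<forall>n\<ge>N. norm (norm (sqrt_one_minus_coeff n *\<^sub>R Blinfun (P ^^ n)))
      \<le> \<bar>sqrt_one_minus_coeff n\<bar>"
    by (auto intro!: mult_left_le)
qed

lemma sqrt_one_minus_op_sums:
  "(\<lambda>n. sqrt_one_minus_coeff n *\<^sub>R Blinfun (P ^^ n)) sums sqrt_one_minus_op P"
  unfolding sqrt_one_minus_op_def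
  by (rule summable_sums[OF summable_norm_cancel[OF summable_norm_sqrt_one_minus_series]])

lemma sqrt_one_minus_op_apply_sums:
  "(\<lambda>n. sqrt_one_minus_coeff n *\<^sub>R (P ^^ n) x) sums blinfun_apply (sqrt_one_minus_op P) x"
  using bounded_linear.sums[OF blinfun.bounded_linear_left sqrt_one_minus_op_sums, of x]
  by (simp add: blinfun.scaleR_left)

lemma sqrt_one_minus_op_squared:
  "sqrt_one_minus_op P o\<^sub>L sqrt_one_minus_op P = id_blinfun - Blinfun P"
proof -
  let ?c = sqrt_one_minus_coeff
  have "(\<lambda>k. \<Sum>i\<le>k. (?c i *\<^sub>R Blinfun (P ^^ i)) o\<^sub>L (?c (k - i) *\<^sub>R Blinfun (P ^^ (k - i))))
      sums (sqrt_one_minus_op P o\<^sub>L sqrt_one_minus_op P)"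
    by (intro bounded_bilinear.Cauchy_product_sums[OF bounded_bilinear_blinfun_compose]
        summable_norm_sqrt_one_minus_series sqrt_one_minus_op_sums)
  moreover have "(\<Sum>i\<le>k. (?c i *\<^sub>R Blinfun (P ^^ i)) o\<^sub>L (?c (k - i) *\<^sub>R Blinfun (P ^^ (k - i))))
      = (\<Sum>i\<le>k. ?c i * ?c (k - i)) *\<^sub>R Blinfun (P ^^ k)" for k
    by (simp add: scaleR_sum_left bounded_bilinear.scaleR_left[OF bounded_bilinear_blinfun_compose]
        bounded_bilinear.scaleR_right[OF bounded_bilinear_blinfun_compose]
        Blinfun_funpow_compose mult.commute)
  ultimately have "(\<lambda>k. (if k = 0 then 1 else if k = 1 then -1 else 0) *\<^sub>R Blinfun (P ^^ k))
      sums (sqrt_one_minus_op P o\<^sub>L sqrt_one_minus_op P)"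
    by (simp add: sqrt_one_minus_coeff_convolution)
  moreover have "(\<lambda>k. (if k = 0 then 1 else if k = 1 then -1 else 0) *\<^sub>R Blinfun (P ^^ k))
      sums (id_blinfun - Blinfun P)"
  proof -
    have "Blinfun (P ^^ 0) = id_blinfun"
      using blinfun_apply_Blinfun_funpow[of 0] by (intro blinfun_eqI) simp
    then show ?thesis
      using sums_finite[of "{0, 1}" "\<lambda>k. (if k = 0 then 1 else if k = 1 then -1 else 0) *\<^sub>R Blinfun (P ^^ k)"]
      by simp
  qed
  ultimately show ?thesis
    using sums_unique2 by blast
qed

lemma sqrt_one_minus_op_commute:
  assumes Q: "bounded_op Q" and QP: "\<And>x. Q (P x) = P (Q x)"
  shows "Q (sqrt_one_minus_op P x) = sqrt_one_minus_op P (Q x)"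
proof -
  have QPn: "Q ((P ^^ n) x) = (P ^^ n) (Q x)" for n
    by (induction n) (simp_all add: QP)
  have "(\<lambda>n. Q (sqrt_one_minus_coeff n *\<^sub>R (P ^^ n) x)) sums Q (sqrt_one_minus_op P x)"
    by (rule bounded_linear.sums[OF bounded_op_bounded_linear[OF Q] sqrt_one_minus_op_apply_sums])
  then have "(\<lambda>n. sqrt_one_minus_coeff n *\<^sub>R (P ^^ n) (Q x)) sums Q (sqrt_one_minus_op P x)"
    by (simp add: clinear_op_scaleR[OF bounded_op_clinear[OF Q]] QPn)
  then show ?thesis
    using sqrt_one_minus_op_apply_sums sums_unique2 by blast
qed

lemma is_adjoint_sqrt_one_minus_op:
  "is_adjoint (sqrt_one_minus_op P) (sqrt_one_minus_op P)"
  unfolding is_adjoint_def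
proof (intro conjI allI)
  have "sqrt_one_minus_op P (c *\<^sub>C x) = c *\<^sub>C sqrt_one_minus_op P x" for c x
    using sqrt_one_minus_op_commute[OF bounded_op_scaleC[OF bounded_op_id], of c]
    by (simp add: clinear_opD(2)[OF bounded_op_clinear[OF is_adjoint_bounded[OF P_adj]]])
  then show "bounded_op (sqrt_one_minus_op P)"
    by (intro bounded_opI[where K="norm (sqrt_one_minus_op P)"] clinear_opI)
      (simp_all add: blinfun.add_right norm_blinfun)
  fix x y
  have "(\<lambda>n. cinner (sqrt_one_minus_coeff n *\<^sub>R (P ^^ n) x) y) sums cinner (sqrt_one_minus_op P x) y"
    by (rule bounded_linear.sums[OF bounded_linear_cinner_left sqrt_one_minus_op_apply_sums])
  moreover have "(\<lambda>n. cinner x (sqrt_one_minus_coeff n *\<^sub>R (P ^^ n) y)) sums cinner x (sqrt_one_minus_op P y)"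
    by (rule bounded_linear.sums[OF bounded_linear_cinner_right sqrt_one_minus_op_apply_sums])
  ultimately show "cinner (sqrt_one_minus_op P x) y = cinner x (sqrt_one_minus_op P y)"
    by (simp add: cinner_scaleR_left cinner_scaleR_right
        is_adjointD[OF is_adjoint_funpow[OF P_adj]] sums_unique2)
qed

lemma sqrt_one_minus_op_squared_apply:
  "sqrt_one_minus_op P (sqrt_one_minus_op P x) = x - P x"
  using arg_cong[OF sqrt_one_minus_op_squared, of "\<lambda>B. blinfun_apply B x"]
  by (simp add: blinfun.diff_left bounded_linear_Blinfun_apply[OF bounded_op_bounded_linear[OF is_adjoint_bounded[OF P_adj]]])

end

lemma unitary_op_of_commuting_square_root:
  assumes T: "is_adjoint T T" and R: "is_adjoint R R"
    and R_square: "\<And>x. R (R x) = x - T (T x)" and TR: "\<And>x. T (R x) = R (T x)"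
  defines "U \<equiv> \<lambda>x. T x + \<i> *\<^sub>C R x"
  shows "unitary_op U" "ReOp U = T"
proof -
  define V where "V x = T x - \<i> *\<^sub>C R x" for x
  have "bounded_op T" "bounded_op R"
    using T R by (simp_all add: is_adjoint_bounded)
  have "is_adjoint U V"
    unfolding is_adjoint_def
  proof (intro conjI allI)
    show "bounded_op V"
      unfolding V_def by (intro bounded_op_diff bounded_op_scaleC) fact+
    show "cinner (U x) y = cinner x (V y)" for x y
      by (simp add: U_def V_def cinner_add_left cinner_scaleC_left cinner_diff_right
          cinner_scaleC_right is_adjointD[OF T] is_adjointD[OF R])
  qed
  then have adj_U: "adj U = V"
    by (rule adj_eqI)
  have T_lin: "clinear_op T" and R_lin: "clinear_op R"
    using \<open>bounded_op T\<close> \<open>bounded_op R\<close> by (simp_all add: bounded_op_clinear)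
  have "V (U x) = x" "U (V x) = x" for x
    by (simp_all add: U_def V_def clinear_opD[OF T_lin] clinear_opD[OF R_lin]
        clinear_op_diff[OF T_lin] clinear_op_diff[OF R_lin] scaleC_add_right scaleC_diff_right
        scaleC_scaleC R_square TR scaleC_minus_left scaleC_one)
  moreover have "bounded_op U"
    unfolding U_def by (intro bounded_op_add bounded_op_scaleC) fact+
  ultimately show "unitary_op U"
    unfolding unitary_op_def adj_U by (simp add: fun_eq_iff)
  show "ReOp U = T"
    unfolding ReOp_def adj_U
    by (simp add: U_def V_def fun_eq_iff scaleC_add_right scaleC_one flip: scaleC_add_left)
qed

lemma self_adjoint_contraction_eq_ReOp_unitary:
  fixes T :: "'a::chilbert \<Rightarrow> 'a"
  assumes T: "is_adjoint T T" and contraction: "\<And>x. norm (T x) \<le> norm x"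
  obtains U where "unitary_op U" "ReOp U = T"
proof -
  define P where "P = (\<lambda>x. T (T x))"
  have P: "is_adjoint P P"
    unfolding P_def by (rule is_adjoint_compose[OF T T])
  have P_contraction: "norm (P x) \<le> norm x" for x
    unfolding P_def using contraction order_trans by blast
  define R where "R = blinfun_apply (sqrt_one_minus_op P)"
  have "is_adjoint R R" "\<And>x. R (R x) = x - T (T x)" "\<And>x. T (R x) = R (T x)"
    using is_adjoint_sqrt_one_minus_op[OF P P_contraction]
      sqrt_one_minus_op_squared_apply[OF P P_contraction]
      sqrt_one_minus_op_commute[OF P P_contraction is_adjoint_bounded[OF T]]
    by (simp_all add: R_def P_def)
  then show ?thesis
    using that unitary_op_of_commuting_square_root[OF T] by blast
qed

lemma norm_ReOp_le:
  assumes N: "is_norm_on_ops N" and "bounded_op U" "bounded_op (adj U)"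
  shows "2 * N (ReOp U) \<le> N U + N (adj U)"
proof -
  have "N (ReOp U) = cmod (1/2) * N (\<lambda>x. U x + adj U x)"
    unfolding ReOp_def by (intro is_norm_on_ops_scaleC N bounded_op_add assms)
  also have "\<dots> \<le> (1/2) * (N U + N (adj U))"
    using is_norm_on_ops_triangle[OF N assms(2,3)] by simp
  finally show ?thesis
    by simp
qed

lemma twice_norm_le_unitary:
  fixes T :: "'a::chilbert \<Rightarrow> 'a"
  assumes N: "is_norm_on_ops N" and T: "self_adjoint_op T" "opnorm T \<le> 1"
  obtains U where "unitary_op U" "2 * N T \<le> N U + N (adj U)"
proof -
  have "norm (T x) \<le> norm x" for x
    using bounded_op_norm_le[of T x] T mult_right_mono[OF T(2) norm_ge_zero, of x]
    unfolding self_adjoint_op_def by simp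
  then obtain U where U: "unitary_op U" "ReOp U = T"
    using self_adjoint_contraction_eq_ReOp_unitary[OF self_adjoint_op_is_adjoint[OF T(1)]] by blast
  have "bounded_op U"
    using U(1) unfolding unitary_op_def by simp
  then have "2 * N T \<le> N U + N (adj U)"
    using norm_ReOp_le[OF N _ bounded_op_adj] U(2) by blast
  with U(1) show ?thesis
    by (rule that)
qed

lemma twice_norm_le_SUP_unitary:
  fixes T :: "'a::chilbert \<Rightarrow> 'a"
  assumes "is_norm_on_ops N" "self_adjoint_op T" "opnorm T \<le> 1"
  shows "ereal (2 * N T) \<le> (SUP U\<in>{U. unitary_op U}. ereal (N U + N (adj U)))"
proof -
  obtain U where "unitary_op U" "2 * N T \<le> N U + N (adj U)"
    using twice_norm_le_unitary[OF assms] by blast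
  then show ?thesis
    by (intro SUP_upper2[where i=U]) simp_all
qed

lemma norm_le_SUP_unitary:
  fixes T :: "'a::chilbert \<Rightarrow> 'a"
  assumes "is_norm_on_ops N" "selfadjoint_norm N" "self_adjoint_op T" "opnorm T \<le> 1"
  shows "ereal (N T) \<le> (SUP U\<in>{U. unitary_op U}. ereal (N U))"
proof -
  obtain U where U: "unitary_op U" "2 * N T \<le> N U + N (adj U)"
    using twice_norm_le_unitary[OF assms(1,3,4)] by blast
  moreover have "N (adj U) = N U"
    using assms(2) U(1) unfolding selfadjoint_norm_def unitary_op_def by simp
  ultimately show ?thesis
    by (intro SUP_upper2[where i=U]) simp_all
qed

lemma ereal_le_min_mult:
  assumes "0 \<le> a" "0 \<le> b" "w \<le> c * a * b" "ereal (c * a) \<le> M" "ereal (c * b) \<le> M"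
  shows "ereal w \<le> ereal (min a b) * M"
proof -
  have "ereal w \<le> ereal (min a b) * ereal (c * max a b)"
    using assms(3) by (simp add: min_def max_def mult_ac)
  also have "\<dots> \<le> ereal (min a b) * M"
    using assms by (intro ereal_mult_left_mono) (auto simp: max_def)
  finally show ?thesis .
qed

lemma le_min_norm_mult_SUP_unitary:
  fixes T S :: "'a::chilbert \<Rightarrow> 'a"
  assumes N: "is_norm_on_ops N" and T: "self_adjoint_op T" "opnorm T \<le> 1"
    and S: "self_adjoint_op S" "opnorm S \<le> 1" and "w \<le> 2 * N T * N S"
  shows "ereal w \<le> ereal (min (N T) (N S)) * (SUP U\<in>{U. unitary_op U}. ereal (N U + N (adj U)))"
  using assms
  by (intro ereal_le_min_mult[where c=2] twice_norm_le_SUP_unitary is_norm_on_ops_nonneg[OF N])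
    (simp_all add: self_adjoint_op_def)

lemma le_twice_min_norm_mult_SUP_unitary:
  fixes T S :: "'a::chilbert \<Rightarrow> 'a"
  assumes N: "is_norm_on_ops N" "selfadjoint_norm N" and T: "self_adjoint_op T" "opnorm T \<le> 1"
    and S: "self_adjoint_op S" "opnorm S \<le> 1" and "w \<le> 2 * N T * N S"
  shows "ereal w \<le> ereal (2 * min (N T) (N S)) * (SUP U\<in>{U. unitary_op U}. ereal (N U))"
proof -
  have "ereal w \<le> ereal (min (2 * N T) (2 * N S)) * (SUP U\<in>{U. unitary_op U}. ereal (N U))"
    using assms
    by (intro ereal_le_min_mult[where c="1/2"])
      (simp_all add: norm_le_SUP_unitary is_norm_on_ops_nonneg self_adjoint_op_def)
  then show ?thesis
    by (simp add: min_mult_distrib_left)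
qed

theorem theorem2p6:
  fixes N :: "('a::chilbert \<Rightarrow> 'a) \<Rightarrow> real" and T S :: "'a \<Rightarrow> 'a"
  assumes "algebra_norm N" and "weakly_unitarily_invariant N"
    and "self_adjoint_op T" and "self_adjoint_op S"
    and "opnorm T \<le> 1" and "opnorm S \<le> 1"
  shows "(ereal (wN N (\<lambda>x. T (S x) + S (T x)))
            \<le> ereal (min (wN N T) (wN N S)) * (SUP U\<in>{U. unitary_op U}. ereal (N U + N (adj U))))
       \<and> (ereal (wN N (\<lambda>x. T (S x) - S (T x)))
            \<le> ereal (min (wN N T) (wN N S)) * (SUP U\<in>{U. unitary_op U}. ereal (N U + N (adj U))))
       \<and> (selfadjoint_norm N \<longrightarrow>
            (ereal (wN N (\<lambda>x. T (S x) + S (T x)))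
               \<le> ereal (2 * min (N T) (N S)) * (SUP U\<in>{U. unitary_op U}. ereal (N U)))
          \<and> (ereal (wN N (\<lambda>x. T (S x) - S (T x)))
               \<le> ereal (2 * min (N T) (N S)) * (SUP U\<in>{U. unitary_op U}. ereal (N U))))"
proof -
  have N: "is_norm_on_ops N"
    using assms(1) unfolding algebra_norm_def by simp
  have T: "is_adjoint T T" and S: "is_adjoint S S"
    using assms(3,4) by (simp_all add: self_adjoint_op_is_adjoint)
  have "bounded_op T" "bounded_op S"
    using T S by (simp_all add: is_adjoint_bounded)
  have "wN N (\<lambda>x. T (S x) + S (T x)) \<le> 2 * N T * N S"
    unfolding wN_self_adjoint[OF N is_adjoint_anticommutator[OF T S]]
    by (rule algebra_norm_anticommutator_le[OF assms(1) \<open>bounded_op T\<close> \<open>bounded_op S\<close>])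
  moreover have "wN N (\<lambda>x. T (S x) - S (T x)) \<le> 2 * N T * N S"
    unfolding wN_skew_adjoint[OF N is_adjoint_commutator[OF T S]]
    by (rule algebra_norm_commutator_le[OF assms(1) \<open>bounded_op T\<close> \<open>bounded_op S\<close>])
  ultimately show ?thesis
    unfolding wN_self_adjoint[OF N T] wN_self_adjoint[OF N S]
    using le_min_norm_mult_SUP_unitary[OF N assms(3,5,4,6)]
      le_twice_min_norm_mult_SUP_unitary[OF N _ assms(3,5,4,6)]
    by blast
qed

end
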